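(* There exists a finite game $G$ such that $\mathcal{X}^{CCE}\not\subseteq\mathcal{X}^{PS\text{-}NF}$, i.e. some coarse correlated equilibrium $x$ of $G$ is not equal to $x_\varnothing$ for any perfectly stable $\mathbf{x}=[x_\pi]$ of the Stackelberg game $(G,N,\emptyset)$.
   Context: A finite game is $G=(N,\{S_p\}_{p\in N},\{u_p\}_{p\in N})$ with players $N=\{1,\dots,n\}$, finite nonempty strategy sets $S_p$, and utilities $u_p:S\to\mathbb{R}$ on $S=\prod_{p\in N}S_p$; write $s=(s_p,s_{-p})$ with $s_{-p}\in S_{-p}=\prod_{q\neq p}S_q$. $\mathcal{X}=\Delta(S)$ is the set of probability distributions on $S$ and $u_p(x)=\sum_{s\in S}x(s)u_p(s)$ for $x\in\mathcal{X}$. For $P\subseteq N$, $\mathcal{X}^{CE}_P$ is the set of $x\in\mathcal{X}$ such that for every $p\in P$ and all $s_p\neq s_p'\in S_p$: $\sum_{s_{-p}\in S_{-p}} x(s_p,s_{-p})\,(u_p(s_p,s_{-p})-u_p(s_p',s_{-p}))\ge 0$; $\mathcal{X}^{CE}=\mathcal{X}^{CE}_N$ is the set of correlated equilibria of $G$. $\mathcal{X}^{CCE}$ is the set of coarse correlated equilibria of $G$: $x\in\mathcal{X}$ with $\sum_{s\in S}x(s)(u_p(s)-u_p(s_p',s_{-p}))\ge 0$ for all $p\in N$, $s_p'\in S_p$. A Stackelberg game (SG) is a triple $(G,L,F)$ with $L\cup F=N$ and $L\cap F=\emptyset$ (leaders and followers). For $P\subseteq N$, $\Pi_P$ is the set of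 ordered subsets of $P$ (finite sequences of pairwise distinct elements of $P$, including the empty sequence $\varnothing$); for $\pi\in\Pi_P$ and $p\in P$ not occurring in $\pi$, $\pi p$ is $\pi$ with $p$ appended; when used as a set, $\pi$ means its set of entries. $\mathbf{X}=\prod_{\pi\in\Pi_L}\mathcal{X}^{CE}_{\pi\cup F}$, with elements $\mathbf{x}=[x_\pi]_{\pi\in\Pi_L}$. For $\mathbf{x}\in\mathbf{X}$ and $\pi\in\Pi_L$, $x_\pi$ is stable if $u_p(x_\pi)\ge u_p(x_{\pi p})$ for all $p\in L\setminus\pi$; $\mathbf{x}$ is stable if $x_\varnothing$ is stable, and perfectly stable if $x_\pi$ is stable for every $\pi\in\Pi_L$; $\mathbf{X}^{S}$ and $\mathbf{X}^{PS}$ denote the sets of stable and perfectly stable elements of $\mathbf{X}$. $\mathcal{X}^{S\text{-}NF}=\{x_\varnothing:\mathbf{x}\in\mathbf{X}^S\}$ and $\mathcal{X}^{PS\text{-}NF}=\{x_\varnothing:\mathbf{x}\in\mathbf{X}^{PS}\}$ computed for the SG $(G,N,\emptyset)$ in which every player is a leader. *)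

theory Defs
  imports "HOL-Analysis.Analysis"
begin

text \<open>Strategies are encoded as naturals; a pure profile is an extensional
  function in PiE N S.\<close>

type_synonym profile = "nat \<Rightarrow> nat"
type_synonym dist = "profile \<Rightarrow> real"

definition finite_game :: "nat set \<Rightarrow> (nat \<Rightarrow> nat set) \<Rightarrow> bool" where
  "finite_game N S \<longleftrightarrow> finite N \<and> (\<forall>p\<in>N. finite (S p) \<and> S p \<noteq> {})"

definition profiles :: "nat set \<Rightarrow> (nat \<Rightarrow> nat set) \<Rightarrow> profile set" where
  "profiles N S = PiE N S"

definition distrs :: "nat set \<Rightarrow> (nat \<Rightarrow> nat set) \<Rightarrow> dist set" where
  "distrs N S = {x. (\<forall>s. 0 \<le> x s) \<and> (\<forall>s. s \<notin> profiles N S \<longrightarrow> x s = 0)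
                    \<and> (\<Sum>s\<in>profiles N S. x s) = 1}"

definition exp_util :: "nat set \<Rightarrow> (nat \<Rightarrow> nat set) \<Rightarrow> (nat \<Rightarrow> profile \<Rightarrow> real)
                         \<Rightarrow> nat \<Rightarrow> dist \<Rightarrow> real" where
  "exp_util N S u p x = (\<Sum>s\<in>profiles N S. x s * u p s)"

text \<open>X^CE_P: the sum over s_{-p} of x(s_p,s_{-p})(...) is the sum over profiles
  s with s p = a.\<close>
definition CE_P :: "nat set \<Rightarrow> (nat \<Rightarrow> nat set) \<Rightarrow> (nat \<Rightarrow> profile \<Rightarrow> real)
                     \<Rightarrow> nat set \<Rightarrow> dist set" where
  "CE_P N S u P = {x \<in> distrs N S. \<forall>p\<in>P. \<forall>a\<in>S p. \<forall>b\<in>S p. a \<noteq> b \<longrightarrow>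
      0 \<le> (\<Sum>s\<in>{s \<in> profiles N S. s p = a}. x s * (u p s - u p (s(p := b))))}"

definition CCE :: "nat set \<Rightarrow> (nat \<Rightarrow> nat set) \<Rightarrow> (nat \<Rightarrow> profile \<Rightarrow> real) \<Rightarrow> dist set" where
  "CCE N S u = {x \<in> distrs N S. \<forall>p\<in>N. \<forall>b\<in>S p.
      0 \<le> (\<Sum>s\<in>profiles N S. x s * (u p s - u p (s(p := b))))}"

definition ordered_subsets :: "nat set \<Rightarrow> nat list set" where
  "ordered_subsets P = {\<pi>. distinct \<pi> \<and> set \<pi> \<subseteq> P}"

definition SG_X :: "nat set \<Rightarrow> (nat \<Rightarrow> nat set) \<Rightarrow> (nat \<Rightarrow> profile \<Rightarrow> real)
                     \<Rightarrow> nat set \<Rightarrow> nat set \<Rightarrow> (nat list \<Rightarrow> dist) set" where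
  "SG_X N S u L F = {X. \<forall>\<pi>\<in>ordered_subsets L. X \<pi> \<in> CE_P N S u (set \<pi> \<union> F)}"

definition stable_at :: "nat set \<Rightarrow> (nat \<Rightarrow> nat set) \<Rightarrow> (nat \<Rightarrow> profile \<Rightarrow> real)
                     \<Rightarrow> nat set \<Rightarrow> (nat list \<Rightarrow> dist) \<Rightarrow> nat list \<Rightarrow> bool" where
  "stable_at N S u L X \<pi> \<longleftrightarrow> (\<forall>p\<in>L - set \<pi>. exp_util N S u p (X (\<pi> @ [p])) \<le> exp_util N S u p (X \<pi>))"

definition perfectly_stable :: "nat set \<Rightarrow> (nat \<Rightarrow> nat set) \<Rightarrow> (nat \<Rightarrow> profile \<Rightarrow> real)
                     \<Rightarrow> nat set \<Rightarrow> nat set \<Rightarrow> (nat list \<Rightarrow> dist) set" where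
  "perfectly_stable N S u L F = {X \<in> SG_X N S u L F. \<forall>\<pi>\<in>ordered_subsets L. stable_at N S u L X \<pi>}"

definition PS_NF :: "nat set \<Rightarrow> (nat \<Rightarrow> nat set) \<Rightarrow> (nat \<Rightarrow> profile \<Rightarrow> real) \<Rightarrow> dist set" where
  "PS_NF N S u = {X [] | X. X \<in> perfectly_stable N S u N {}}"

end

theory Submission
  imports Defs
begin

text \<open>Player 1 has strategies 0, 1, 2 and player 2 has 0, 1; the payoffs are
  \<open>(u\<^sub>1, u\<^sub>2)\<close> = ((0,1), (1,0); (2,2), (0,0); (1,0), (0,0)), rows indexed by the strategy
  of player 1. The unique correlated equilibrium is the pure profile (1,0), worth 2 to both
  players. In a perfectly stable family the order "1 then 2" ends in a correlated equilibrium,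
  so stability of player 2 forces \<open>u\<^sub>2(x\<^bsub>[1]\<^esub>) \<ge> 2\<close>; since \<open>u\<^sub>1 \<ge> 2u\<^sub>2 - 2\<close> pointwise, also
  \<open>u\<^sub>1(x\<^bsub>[1]\<^esub>) \<ge> 2\<close>, and stability of player 1 then forces \<open>u\<^sub>1(x\<^bsub>[]\<^esub>) \<ge> 2\<close>. The coarse
  correlated equilibrium 1/3 (1,0) + 2/3 (2,1) gives player 1 only 2/3.\<close>

lemma CE_P_distrs: "x \<in> CE_P N S u P \<Longrightarrow> x \<in> distrs N S"
  by (simp add: CE_P_def)

lemma CE_PD:
  assumes "x \<in> CE_P N S u P" "p \<in> P" "a \<in> S p" "b \<in> S p" "a \<noteq> b"
  shows "0 \<le> (\<Sum>s\<in>{s \<in> profiles N S. s p = a}. x s * (u p s - u p (s(p := b))))"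
  using assms by (simp add: CE_P_def)

lemma perfectly_stable_CE_P:
  "X \<in> perfectly_stable N S u L F \<Longrightarrow> \<pi> \<in> ordered_subsets L \<Longrightarrow> X \<pi> \<in> CE_P N S u (set \<pi> \<union> F)"
  by (simp add: perfectly_stable_def SG_X_def)

lemma perfectly_stable_step:
  "X \<in> perfectly_stable N S u L F \<Longrightarrow> \<pi> \<in> ordered_subsets L \<Longrightarrow> p \<in> L - set \<pi> \<Longrightarrow>
   exp_util N S u p (X (\<pi> @ [p])) \<le> exp_util N S u p (X \<pi>)"
  by (simp add: perfectly_stable_def stable_at_def)

lemma exp_util_affine_bound:
  assumes x: "x \<in> distrs N S" and bound: "\<And>s. s \<in> profiles N S \<Longrightarrow> a * u q s + b \<le> u p s"
  shows "a * exp_util N S u q x + b \<le> exp_util N S u p x"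
proof -
  have "(\<Sum>s\<in>profiles N S. x s * (a * u q s + b)) =
        a * (\<Sum>s\<in>profiles N S. x s * u q s) + b * (\<Sum>s\<in>profiles N S. x s)"
    by (simp add: algebra_simps sum.distrib sum_distrib_left)
  then have "a * exp_util N S u q x + b = (\<Sum>s\<in>profiles N S. x s * (a * u q s + b))"
    using x by (simp add: exp_util_def distrs_def)
  also have "\<dots> \<le> exp_util N S u p x"
    unfolding exp_util_def using x bound by (intro sum_mono mult_left_mono) (auto simp: distrs_def)
  finally show ?thesis .
qed

definition pair_profile :: "nat \<Rightarrow> nat \<Rightarrow> profile" where
  "pair_profile a b = (\<lambda>i. if i = 1 then a else if i = 2 then b else undefined)"

lemma pair_profile_apply [simp]:
  "pair_profile a b 1 = a" "pair_profile a b (Suc 0) = a" "pair_profile a b 2 = b"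
  by (auto simp: pair_profile_def)

lemma pair_profile_eq_iff [simp]: "pair_profile a b = pair_profile c d \<longleftrightarrow> a = c \<and> b = d"
  by (metis pair_profile_apply(2,3))

lemma profiles_two_players:
  "profiles {1..2} S = (\<lambda>(a, b). pair_profile a b) ` (S 1 \<times> S 2)"
proof (intro equalityI subsetI)
  fix s assume s: "s \<in> profiles {1..2} S"
  have "s = pair_profile (s 1) (s 2)"
  proof
    fix i show "s i = pair_profile (s 1) (s 2) i"
      using s unfolding profiles_def pair_profile_def PiE_def extensional_def
      by (cases "i = 1"; cases "i = 2") auto
  qed
  moreover have "s 1 \<in> S 1" "s 2 \<in> S 2"
    using s by (auto simp: profiles_def)
  ultimately show "s \<in> (\<lambda>(a, b). pair_profile a b) ` (S 1 \<times> S 2)"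
    by force
next
  fix s assume "s \<in> (\<lambda>(a, b). pair_profile a b) ` (S 1 \<times> S 2)"
  moreover have "{1..2::nat} = {1, 2}" by auto
  ultimately show "s \<in> profiles {1..2} S"
    by (auto simp: profiles_def pair_profile_def PiE_def extensional_def)
qed

lemma sum_profiles_two_players:
  "(\<Sum>s\<in>profiles {1..2} S. g s) = (\<Sum>a\<in>S 1. \<Sum>b\<in>S 2. g (pair_profile a b))"
proof -
  have "inj_on (\<lambda>(a, b). pair_profile a b) (S 1 \<times> S 2)"
    by (auto simp: inj_on_def)
  from sum.reindex[OF this]
  have "(\<Sum>s\<in>profiles {1..2} S. g s) = (\<Sum>(a, b)\<in>S 1 \<times> S 2. g (pair_profile a b))"
    unfolding profiles_two_players by (simp add: comp_def case_prod_beta)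
  then show ?thesis
    by (simp add: sum.cartesian_product)
qed

definition S_ex :: "nat \<Rightarrow> nat set" where
  "S_ex p = (if p = 1 then {0, 1, 2} else {0, 1})"

definition u_ex :: "nat \<Rightarrow> profile \<Rightarrow> real" where
  "u_ex p s =
    (if p = 1 then
       (if s 1 = 0 then (if s 2 = 0 then 0 else 1)
        else if s 1 = 1 then (if s 2 = 0 then 2 else 0)
        else (if s 2 = 0 then 1 else 0))
     else (if s 2 = 0 then (if s 1 = 0 then 1 else if s 1 = 1 then 2 else 0) else 0))"

definition x_ex :: dist where
  "x_ex s = (if s = pair_profile 1 0 then 1/3 else if s = pair_profile 2 1 then 2/3 else 0)"

lemma S_ex_simps [simp]: "S_ex 1 = {0, 1, 2}" "S_ex 2 = {0, 1}"
  by (auto simp: S_ex_def)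

lemma finite_game_ex: "finite_game {1..2} S_ex"
  by (auto simp: finite_game_def S_ex_def)

lemma sum_profiles_ex:
  "(\<Sum>s\<in>profiles {1..2} S_ex. g s) =
     g (pair_profile 0 0) + g (pair_profile 0 1) + g (pair_profile 1 0) +
     g (pair_profile 1 1) + g (pair_profile 2 0) + g (pair_profile 2 1)"
  unfolding sum_profiles_two_players S_ex_simps by (simp add: algebra_simps)

lemma sum_profiles_ex_filter:
  "(\<Sum>s\<in>{s \<in> profiles {1..2} S_ex. s p = a}. g s) =
     (\<Sum>s\<in>profiles {1..2} S_ex. if s p = a then g s else 0)"
  by (simp add: sum.inter_filter profiles_def S_ex_def finite_PiE)

lemma distrs_ex_nonneg_and_sum:
  assumes "x \<in> distrs {1..2} S_ex"
  shows "0 \<le> x (pair_profile 0 0)" "0 \<le> x (pair_profile 0 1)" "0 \<le> x (pair_profile 1 0)"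
    "0 \<le> x (pair_profile 1 1)" "0 \<le> x (pair_profile 2 0)" "0 \<le> x (pair_profile 2 1)"
    "x (pair_profile 0 0) + x (pair_profile 0 1) + x (pair_profile 1 0) +
     x (pair_profile 1 1) + x (pair_profile 2 0) + x (pair_profile 2 1) = 1"
  using assms unfolding distrs_def sum_profiles_ex by simp_all

lemma x_ex_CCE: "x_ex \<in> CCE {1..2} S_ex u_ex"
proof -
  have "pair_profile 1 0 \<in> profiles {1..2} S_ex"
    unfolding profiles_two_players by (rule image_eqI[of _ _ "(1, 0)"]) (auto simp: S_ex_def)
  moreover have "pair_profile 2 1 \<in> profiles {1..2} S_ex"
    unfolding profiles_two_players by (rule image_eqI[of _ _ "(2, 1)"]) (auto simp: S_ex_def)
  ultimately have "x_ex s = 0" if "s \<notin> profiles {1..2} S_ex" for s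
    using that by (auto simp: x_ex_def)
  moreover have "0 \<le> (\<Sum>s\<in>profiles {1..2} S_ex. x_ex s * (u_ex p s - u_ex p (s(p := b))))"
    if "p \<in> {1..2}" "b \<in> S_ex p" for p b
  proof -
    from that have "p = 1 \<or> p = 2"
      by auto
    with that(2) have "p = 1 \<and> b \<in> {0, 1, 2} \<or> p = 2 \<and> b \<in> {0, 1}"
      by (auto simp: S_ex_def)
    then show ?thesis
      unfolding sum_profiles_ex by (elim disjE conjE; auto simp: x_ex_def u_ex_def)
  qed
  moreover have "(\<Sum>s\<in>profiles {1..2} S_ex. x_ex s) = 1"
    unfolding sum_profiles_ex by (simp add: x_ex_def)
  ultimately show ?thesis
    by (auto simp: CCE_def distrs_def x_ex_def)
qed

lemma exp_util_x_ex: "exp_util {1..2} S_ex u_ex 1 x_ex = 2/3"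
  unfolding exp_util_def sum_profiles_ex by (simp add: x_ex_def u_ex_def)

lemma CE_ex_payoff_player2:
  assumes z: "z \<in> CE_P {1..2} S_ex u_ex {1, 2}"
  shows "exp_util {1..2} S_ex u_ex 2 z = 2"
proof -
  have dev: "0 \<le> (\<Sum>s\<in>profiles {1..2} S_ex.
                    if s p = a then z s * (u_ex p s - u_ex p (s(p := b))) else 0)"
    if "p \<in> {1, 2}" "a \<in> S_ex p" "b \<in> S_ex p" "a \<noteq> b" for p a b
    using CE_PD[OF z that] unfolding sum_profiles_ex_filter .
  \<comment> \<open>Player 2 never recommends 1, player 1 then never recommends 0, and finally never 2.\<close>
  have "0 \<le> - z (pair_profile 0 1) - 2 * z (pair_profile 1 1)"
    using dev[of 2 1 0] unfolding sum_profiles_ex by (simp add: u_ex_def S_ex_def)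
  moreover have "0 \<le> z (pair_profile 0 1) - 2 * z (pair_profile 0 0)"
    using dev[of 1 0 1] unfolding sum_profiles_ex by (simp add: u_ex_def S_ex_def)
  moreover have "0 \<le> - z (pair_profile 2 0)"
    using dev[of 1 2 1] unfolding sum_profiles_ex by (simp add: u_ex_def S_ex_def)
  moreover have "0 \<le> z (pair_profile 2 0) - z (pair_profile 2 1)"
    using dev[of 1 2 0] unfolding sum_profiles_ex by (simp add: u_ex_def S_ex_def)
  moreover note distrs_ex_nonneg_and_sum[OF CE_P_distrs[OF z]]
  ultimately have "z (pair_profile 1 0) = 1"
    by linarith
  with distrs_ex_nonneg_and_sum[OF CE_P_distrs[OF z]] show ?thesis
    unfolding exp_util_def sum_profiles_ex by (simp add: u_ex_def)
qed

lemma u_ex_player1_ge: "2 * u_ex 2 s + -2 \<le> u_ex 1 s"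
  by (simp add: u_ex_def)

theorem mainTheorem16:
  shows "\<exists>(n::nat) (S :: nat \<Rightarrow> nat set) (u :: nat \<Rightarrow> profile \<Rightarrow> real).
           1 \<le> n \<and> finite_game {1..n} S \<and>
           \<not> (CCE {1..n} S u \<subseteq> PS_NF {1..n} S u)"
proof (intro exI conjI)
  show "1 \<le> (2::nat)" by simp
  show "finite_game {1..2} S_ex" by (rule finite_game_ex)
  show "\<not> CCE {1..2} S_ex u_ex \<subseteq> PS_NF {1..2} S_ex u_ex"
  proof
    assume "CCE {1..2} S_ex u_ex \<subseteq> PS_NF {1..2} S_ex u_ex"
    with x_ex_CCE obtain X where X: "X \<in> perfectly_stable {1..2} S_ex u_ex {1..2} {}"
      and X_nil: "X [] = x_ex"
      by (auto simp: PS_NF_def)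
    let ?U = "exp_util {1..2} S_ex u_ex"
    have os: "[] \<in> ordered_subsets {1..2::nat}" "[1] \<in> ordered_subsets {1..2::nat}"
      "[1, 2] \<in> ordered_subsets {1..2::nat}"
      by (auto simp: ordered_subsets_def)
    have "2 = ?U 2 (X [1, 2])"
      using CE_ex_payoff_player2 perfectly_stable_CE_P[OF X os(3)] by simp
    also have "\<dots> \<le> ?U 2 (X [1])"
      using perfectly_stable_step[OF X os(2), of 2] by simp
    finally have "2 \<le> ?U 2 (X [1])" .
    moreover have "2 * ?U 2 (X [1]) + -2 \<le> ?U 1 (X [1])"
      by (rule exp_util_affine_bound[OF CE_P_distrs[OF perfectly_stable_CE_P[OF X os(2)]]])
         (rule u_ex_player1_ge)
    moreover have "?U 1 (X [1]) \<le> ?U 1 x_ex"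
      using perfectly_stable_step[OF X os(1), of 1] X_nil by simp
    ultimately show False
      using exp_util_x_ex by linarith
  qed
qed

end
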